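(* Let $l\ge3$ be odd and consider the edge reinforced random walk on $\mathcal G_l$ with weight function $W:\mathbb N\to(0,\infty)$, arbitrary initial edge weights $X_0^e\in\mathbb N$ and arbitrary starting vertex. If $\beta=(\beta_0,\ldots,\beta_{l-1})\in\mathbb R^l$ is a deterministic vector such that $\big(\sum_{i=0}^{l-1}\beta_iW^*(X_n^{e_i})\big)_{n\ge0}$ is an $(\mathcal F_n)$-martingale, then $\beta=0$.
   Context: $\mathbb N=\{0,1,2,\ldots\}$. For $l\ge 3$, the cycle $\mathcal G_l$ has vertices $\{0,\ldots,l-1\}$ and edges $e_i=\{i,i+1\}$, addition modulo $l$. ERRW on $\mathcal G_l$: given $W:\mathbb N\to(0,\infty)$, initial edge weights $X_0^e\in\mathbb N$ and $I_0=v_0$, with natural filtration $(\mathcal F_n)$, $\mathbb P(I_{n+1}=v'\mid\mathcal F_n)1_{\{I_n=v\}}=\frac{W(X_n^{\{v,v'\}})}{\sum_{w\sim v}W(X_n^{\{v,w\}})}1_{\{I_n=v\sim v'\}}$, where $X_n^e=X_0^e+\sum_{k=0}^{n-1}1_{\{\{I_k,I_{k+1}\}=e\}}$. Define $W^*(n):=\sum_{k=0}^{n-1}\frac1{W(k)}$ for $n\in\mathbb N$, with $W^*(0)=0$. *)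

theory Defs
  imports "HOL-Probability.Probability"
begin

definition cyc_adj :: "nat \<Rightarrow> nat \<Rightarrow> nat \<Rightarrow> bool" where
  "cyc_adj l v w \<longleftrightarrow> v < l \<and> w < l \<and> (w = Suc v mod l \<or> v = Suc w mod l)"

definition cyc_edge :: "nat \<Rightarrow> nat \<Rightarrow> nat set" where
  "cyc_edge l i = {i, Suc i mod l}"

definition errw_X :: "nat \<Rightarrow> (nat \<Rightarrow> nat) \<Rightarrow> (nat \<Rightarrow> nat) \<Rightarrow> nat \<Rightarrow> nat \<Rightarrow> nat" where
  "errw_X l X0 p n i = X0 i + card {k. k < n \<and> {p k, p (Suc k)} = cyc_edge l i}"

definition edge_index :: "nat \<Rightarrow> nat \<Rightarrow> nat \<Rightarrow> nat" where
  "edge_index l v w = (if w = Suc v mod l then v else w)"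

definition errw_trans ::
  "nat \<Rightarrow> (nat \<Rightarrow> real) \<Rightarrow> (nat \<Rightarrow> nat) \<Rightarrow> (nat \<Rightarrow> nat) \<Rightarrow> nat \<Rightarrow> nat \<Rightarrow> real" where
  "errw_trans l W X0 p n w =
     (if cyc_adj l (p n) w then
        W (errw_X l X0 p n (edge_index l (p n) w)) /
        (\<Sum>u\<in>{u. u < l \<and> cyc_adj l (p n) u}. W (errw_X l X0 p n (edge_index l (p n) u)))
      else 0)"

text \<open>ERRW on G_l realized on a probability space M by the process I with I_0 = v0:
  the law of (I_0,...,I_{n+1}) is given by the conditional transition probabilities.\<close>
definition is_errw ::
  "'a measure \<Rightarrow> nat \<Rightarrow> (nat \<Rightarrow> real) \<Rightarrow> (nat \<Rightarrow> nat) \<Rightarrow> nat \<Rightarrow> (nat \<Rightarrow> 'a \<Rightarrow> nat) \<Rightarrow> bool" where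
  "is_errw M l W X0 v0 I \<longleftrightarrow>
     prob_space M \<and>
     (\<forall>n. I n \<in> measurable M (count_space UNIV)) \<and>
     (\<forall>\<omega>\<in>space M. I 0 \<omega> = v0) \<and>
     (\<forall>n h w. measure M {\<omega>\<in>space M. (\<forall>k\<le>n. I k \<omega> = h k) \<and> I (Suc n) \<omega> = w}
              = measure M {\<omega>\<in>space M. \<forall>k\<le>n. I k \<omega> = h k} * errw_trans l W X0 h n w)"

definition nat_filtration :: "'a measure \<Rightarrow> (nat \<Rightarrow> 'a \<Rightarrow> nat) \<Rightarrow> nat \<Rightarrow> 'a measure" where
  "nat_filtration M I n = sigma (space M) {I k -` A \<inter> space M | k A. k \<le> n}"

text \<open>Real-valued martingale with respect to a filtration F (standard definition:
  adapted, integrable, and E[Y_{n+1} | F_n] = Y_n, i.e. equal integrals over F_n-sets).\<close>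
definition is_martingale :: "'a measure \<Rightarrow> (nat \<Rightarrow> 'a measure) \<Rightarrow> (nat \<Rightarrow> 'a \<Rightarrow> real) \<Rightarrow> bool" where
  "is_martingale M F Y \<longleftrightarrow>
     (\<forall>n. Y n \<in> borel_measurable (F n)) \<and>
     (\<forall>n. integrable M (Y n)) \<and>
     (\<forall>n. \<forall>A\<in>sets (F n). (\<integral>\<omega>. indicator A \<omega> * Y (Suc n) \<omega> \<partial>M) = (\<integral>\<omega>. indicator A \<omega> * Y n \<omega> \<partial>M))"

definition Wstar :: "(nat \<Rightarrow> real) \<Rightarrow> nat \<Rightarrow> real" where
  "Wstar W n = (\<Sum>k<n. 1 / W k)"

end

theory Submission
  imports Defs
begin

(* Let Y_n = sum_i beta_i W*(X_n^{e_i}). Since W*(m+1) - W*(m) = 1/W(m), a step of the walk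
   across edge e_j raises Y by beta_j / W(X_n^{e_j}) (errw_potential_move). From vertex v the
   walk moves to v+1 across e_v with probability W(X^{e_v})/S and to v-1 across e_{v-1} with
   probability W(X^{e_{v-1}})/S, S the sum of the two weights (errw_trans_at), and almost surely
   nowhere else. Integrating the martingale identity over a cylinder event
   {I_0 = h_0, ..., I_n = h_n} of positive probability therefore gives (beta_v + beta_{v-1})/S = 0
   with v = h_n (martingale_neighbour_relation). Along the clockwise path v0, v0+1, ... every
   cylinder has positive probability because W > 0, and this path visits every vertex, so
   beta_v + beta_{v-1} = 0 for all v. On a cycle of odd length these relations force beta = 0
   (odd_cycle_alternating_zero). *)

definition cpred :: "nat \<Rightarrow> nat \<Rightarrow> nat" where
  "cpred l v = (if v = 0 then l - 1 else v - 1)"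

text \<open>For l \<ge> 3 distinct indices give distinct edges, so a step crosses exactly one edge.\<close>
lemma cyc_edge_inj:
  assumes "l \<ge> 3" "i < l" "j < l" "cyc_edge l i = cyc_edge l j"
  shows "i = j"
  using assms by (auto simp: cyc_edge_def doubleton_eq_iff mod_Suc split: if_splits)

lemma cyc_neighbours:
  assumes "l \<ge> 3" "v < l"
  shows "{u. u < l \<and> cyc_adj l v u} = {Suc v mod l, cpred l v}"
    and "Suc v mod l \<noteq> cpred l v" and "cpred l v < l"
    and "cyc_edge l (cpred l v) = {v, cpred l v}"
  using assms by (auto simp: cyc_adj_def cyc_edge_def cpred_def mod_Suc split: if_splits)

lemma errw_X_cong:
  assumes "\<forall>k\<le>n. p k = q k"
  shows "errw_X l X0 p n i = errw_X l X0 q n i"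
proof -
  have "{k. k < n \<and> {p k, p (Suc k)} = cyc_edge l i} = {k. k < n \<and> {q k, q (Suc k)} = cyc_edge l i}"
    using assms by auto
  then show ?thesis unfolding errw_X_def by simp
qed

lemma errw_X_Suc:
  "errw_X l X0 p (Suc n) i = errw_X l X0 p n i + (if {p n, p (Suc n)} = cyc_edge l i then 1 else 0)"
proof -
  have "{k. k < Suc n \<and> {p k, p (Suc k)} = cyc_edge l i} =
        (if {p n, p (Suc n)} = cyc_edge l i then insert n else id) {k. k < n \<and> {p k, p (Suc k)} = cyc_edge l i}"
    by (auto simp: less_Suc_eq)
  then show ?thesis unfolding errw_X_def by simp
qed

definition errw_potential ::
  "nat \<Rightarrow> (nat \<Rightarrow> real) \<Rightarrow> (nat \<Rightarrow> nat) \<Rightarrow> (nat \<Rightarrow> real) \<Rightarrow> (nat \<Rightarrow> nat) \<Rightarrow> nat \<Rightarrow> real" where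
  "errw_potential l W X0 \<beta> p n = (\<Sum>i<l. \<beta> i * Wstar W (errw_X l X0 p n i))"

lemma errw_potential_cong:
  "\<forall>k\<le>n. p k = q k \<Longrightarrow> errw_potential l W X0 \<beta> p n = errw_potential l W X0 \<beta> q n"
  unfolding errw_potential_def using errw_X_cong by metis

lemma errw_potential_step:
  assumes "l \<ge> 3" "j < l" "{p n, p (Suc n)} = cyc_edge l j"
  shows "errw_potential l W X0 \<beta> p (Suc n)
           = errw_potential l W X0 \<beta> p n + \<beta> j / W (errw_X l X0 p n j)"
proof -
  have crossed: "{p n, p (Suc n)} = cyc_edge l i \<longleftrightarrow> i = j" if "i < l" for i
    using assms cyc_edge_inj[of l i j] that by auto
  have "\<beta> i * Wstar W (errw_X l X0 p (Suc n) i)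
          = \<beta> i * Wstar W (errw_X l X0 p n i) + (if i = j then \<beta> j / W (errw_X l X0 p n j) else 0)"
    if "i < l" for i
    using crossed[OF that] by (simp add: errw_X_Suc Wstar_def distrib_left)
  then show ?thesis
    unfolding errw_potential_def using assms(2) by (simp add: sum.distrib)
qed

lemma errw_potential_move:
  assumes l3: "l \<ge> 3" and hn: "h n < l"
  shows "errw_potential l W X0 \<beta> (h(Suc n := Suc (h n) mod l)) (Suc n)
           = errw_potential l W X0 \<beta> h n + \<beta> (h n) / W (errw_X l X0 h n (h n))"
    and "errw_potential l W X0 \<beta> (h(Suc n := cpred l (h n))) (Suc n)
           = errw_potential l W X0 \<beta> h n + \<beta> (cpred l (h n)) / W (errw_X l X0 h n (cpred l (h n)))"
proof -
  note nb = cyc_neighbours[OF l3 hn]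
  have past_X: "errw_X l X0 (h(Suc n := w)) n i = errw_X l X0 h n i" for w i
    by (rule errw_X_cong) simp
  have past_pot: "errw_potential l W X0 \<beta> (h(Suc n := w)) n = errw_potential l W X0 \<beta> h n" for w
    by (rule errw_potential_cong) simp
  show "errw_potential l W X0 \<beta> (h(Suc n := Suc (h n) mod l)) (Suc n)
          = errw_potential l W X0 \<beta> h n + \<beta> (h n) / W (errw_X l X0 h n (h n))"
    using errw_potential_step[of l "h n" "h(Suc n := Suc (h n) mod l)" n W X0 \<beta>, OF l3 hn]
    by (simp add: cyc_edge_def past_X past_pot)
  show "errw_potential l W X0 \<beta> (h(Suc n := cpred l (h n))) (Suc n)
          = errw_potential l W X0 \<beta> h n + \<beta> (cpred l (h n)) / W (errw_X l X0 h n (cpred l (h n)))"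
    using errw_potential_step[of l "cpred l (h n)" "h(Suc n := cpred l (h n))" n W X0 \<beta>, OF l3 nb(3)]
    by (simp add: nb(4) past_X past_pot)
qed

lemma errw_trans_at:
  fixes W :: "nat \<Rightarrow> real" and X0 :: "nat \<Rightarrow> nat"
  assumes "l \<ge> 3" "p n < l"
  defines "S \<equiv> W (errw_X l X0 p n (p n)) + W (errw_X l X0 p n (cpred l (p n)))"
  shows "errw_trans l W X0 p n (Suc (p n) mod l) = W (errw_X l X0 p n (p n)) / S"
    and "errw_trans l W X0 p n (cpred l (p n)) = W (errw_X l X0 p n (cpred l (p n))) / S"
    and "w \<notin> {Suc (p n) mod l, cpred l (p n)} \<Longrightarrow> errw_trans l W X0 p n w = 0"
proof -
  note nb = cyc_neighbours[OF assms(1,2)]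
  have idx: "edge_index l (p n) (Suc (p n) mod l) = p n"
            "edge_index l (p n) (cpred l (p n)) = cpred l (p n)"
    using nb(2) unfolding edge_index_def by auto
  have denom: "(\<Sum>u\<in>{u. u < l \<and> cyc_adj l (p n) u}. W (errw_X l X0 p n (edge_index l (p n) u))) = S"
    unfolding nb(1) S_def using nb(2) idx by simp
  show "errw_trans l W X0 p n (Suc (p n) mod l) = W (errw_X l X0 p n (p n)) / S"
       "errw_trans l W X0 p n (cpred l (p n)) = W (errw_X l X0 p n (cpred l (p n))) / S"
    unfolding errw_trans_def denom using nb(1) idx by auto
  show "errw_trans l W X0 p n w = 0" if "w \<notin> {Suc (p n) mod l, cpred l (p n)}"
    using that nb(1) assms(2) unfolding errw_trans_def cyc_adj_def by auto
qed

definition cylinder :: "'a measure \<Rightarrow> (nat \<Rightarrow> 'a \<Rightarrow> nat) \<Rightarrow> (nat \<Rightarrow> nat) \<Rightarrow> nat \<Rightarrow> 'a set" where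
  "cylinder M I h n = {\<omega> \<in> space M. \<forall>k\<le>n. I k \<omega> = h k}"

lemma cylinder_as_INT: "cylinder M I h n = (\<Inter>k\<in>{..n}. I k -` {h k} \<inter> space M)"
  unfolding cylinder_def by auto

text \<open>Cylinder events are observable at time n, so the martingale identity applies to them.\<close>
lemma cylinder_in_filtration: "cylinder M I h n \<in> sets (nat_filtration M I n)"
proof -
  have gen: "{I k -` A \<inter> space M | k A. k \<le> n} \<subseteq> Pow (space M)" by auto
  show ?thesis
    unfolding cylinder_as_INT nat_filtration_def
    by (rule sets.finite_INT) (auto intro!: in_measure_of[OF gen])
qed

lemma cylinder_sets:
  assumes "\<And>k. I k \<in> measurable M (count_space UNIV)"
  shows "cylinder M I h n \<in> sets M"
  unfolding cylinder_as_INT using assms by (intro sets.finite_INT) auto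

lemma cylinder_extend:
  "{\<omega> \<in> cylinder M I h n. I (Suc n) \<omega> = w} = cylinder M I (h(Suc n := w)) (Suc n)"
  unfolding cylinder_def by (auto simp: le_Suc_eq)

lemma errw_cylinder_step:
  assumes "is_errw M l W X0 v0 I"
  shows "measure M (cylinder M I (h(Suc n := w)) (Suc n))
           = measure M (cylinder M I h n) * errw_trans l W X0 h n w"
  using assms unfolding is_errw_def cylinder_extend[symmetric] by (simp add: cylinder_def)

lemma errw_moves_to_neighbour:
  assumes E: "is_errw M l W X0 v0 I" and "l \<ge> 3" "h n < l"
  shows "AE \<omega> in M. \<omega> \<in> cylinder M I h n \<longrightarrow> I (Suc n) \<omega> \<in> {Suc (h n) mod l, cpred l (h n)}"
proof -
  interpret prob_space M using E unfolding is_errw_def by blast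
  have meas: "\<And>k. I k \<in> measurable M (count_space UNIV)" using E unfolding is_errw_def by blast
  have "AE \<omega> in M. \<omega> \<notin> cylinder M I (h(Suc n := w)) (Suc n)"
    if "w \<notin> {Suc (h n) mod l, cpred l (h n)}" for w
  proof (rule AE_not_in)
    have "measure M (cylinder M I (h(Suc n := w)) (Suc n)) = 0"
      using errw_cylinder_step[OF E] errw_trans_at(3)[where p=h and n=n, OF assms(2,3) that] by simp
    then show "cylinder M I (h(Suc n := w)) (Suc n) \<in> null_sets M"
      using cylinder_sets[OF meas] by (simp add: null_sets_def emeasure_eq_measure)
  qed
  then have "AE \<omega> in M. \<forall>w. w \<notin> {Suc (h n) mod l, cpred l (h n)}
               \<longrightarrow> \<omega> \<notin> cylinder M I (h(Suc n := w)) (Suc n)"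
    unfolding AE_all_countable by auto
  then show ?thesis
    by eventually_elim (auto simp: cylinder_extend[symmetric])
qed

lemma cylinder_integral_present:
  fixes G :: "(nat \<Rightarrow> nat) \<Rightarrow> real"
  assumes "\<And>p. \<forall>k\<le>n. p k = h k \<Longrightarrow> G p = G h"
  shows "(\<integral>\<omega>. indicator (cylinder M I h n) \<omega> * G (\<lambda>k. I k \<omega>) \<partial>M)
           = measure M (cylinder M I h n) * G h"
proof -
  have "(\<integral>\<omega>. indicator (cylinder M I h n) \<omega> * G (\<lambda>k. I k \<omega>) \<partial>M)
          = (\<integral>\<omega>. indicator (cylinder M I h n) \<omega> * G h \<partial>M)"
  proof (rule Bochner_Integration.integral_cong[OF refl])
    fix \<omega> assume "\<omega> \<in> space M"
    show "indicator (cylinder M I h n) \<omega> * G (\<lambda>k. I k \<omega>) = indicator (cylinder M I h n) \<omega> * G h"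
    proof (cases "\<omega> \<in> cylinder M I h n")
      case True
      then have "G (\<lambda>k. I k \<omega>) = G h" by (intro assms) (simp add: cylinder_def)
      then show ?thesis by simp
    qed simp
  qed
  moreover have "cylinder M I h n \<inter> space M = cylinder M I h n"
    unfolding cylinder_def by blast
  ultimately show ?thesis by simp
qed

lemma errw_cylinder_split_ae:
  fixes G :: "(nat \<Rightarrow> nat) \<Rightarrow> real"
  assumes E: "is_errw M l W X0 v0 I" and l3: "l \<ge> 3" and hn: "h n < l"
    and G_local: "\<And>p q. \<forall>k\<le>Suc n. p k = q k \<Longrightarrow> G p = G q"
  defines "a \<equiv> Suc (h n) mod l" and "b \<equiv> cpred l (h n)"
  shows "AE \<omega> in M. indicator (cylinder M I h n) \<omega> * G (\<lambda>k. I k \<omega>)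
           = G (h(Suc n := a)) * indicator (cylinder M I (h(Suc n := a)) (Suc n)) \<omega>
             + G (h(Suc n := b)) * indicator (cylinder M I (h(Suc n := b)) (Suc n)) \<omega>"
  using errw_moves_to_neighbour[where h=h and n=n, OF E l3 hn]
proof eventually_elim
  case (elim \<omega>)
  have ab: "a \<noteq> b" using cyc_neighbours(2)[OF l3 hn] unfolding a_def b_def .
  show ?case
  proof (cases "\<omega> \<in> cylinder M I h n")
    case True
    define w where "w = I (Suc n) \<omega>"
    have in_C: "\<omega> \<in> cylinder M I (h(Suc n := w')) (Suc n) \<longleftrightarrow> w' = w" for w'
      using True unfolding w_def cylinder_extend[symmetric] by blast
    have G_w: "G (\<lambda>k. I k \<omega>) = G (h(Suc n := w))"
      using True by (intro G_local) (auto simp: cylinder_def w_def le_Suc_eq)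
    have "w = a \<or> w = b" using True elim unfolding w_def a_def b_def by simp
    then show ?thesis using True ab in_C[of a] in_C[of b] G_w by (elim disjE) simp_all
  next
    case False
    then have "\<omega> \<notin> cylinder M I (h(Suc n := w)) (Suc n)" for w
      unfolding cylinder_extend[symmetric] by simp
    then show ?thesis using False by simp
  qed
qed

lemma errw_cylinder_integral_next:
  fixes G :: "(nat \<Rightarrow> nat) \<Rightarrow> real"
  assumes E: "is_errw M l W X0 v0 I" and l3: "l \<ge> 3" and hn: "h n < l"
    and G_meas: "(\<lambda>\<omega>. G (\<lambda>k. I k \<omega>)) \<in> borel_measurable M"
    and G_local: "\<And>p q. \<forall>k\<le>Suc n. p k = q k \<Longrightarrow> G p = G q"
  defines "a \<equiv> Suc (h n) mod l" and "b \<equiv> cpred l (h n)"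
  shows "(\<integral>\<omega>. indicator (cylinder M I h n) \<omega> * G (\<lambda>k. I k \<omega>) \<partial>M)
           = measure M (cylinder M I h n) *
             (errw_trans l W X0 h n a * G (h(Suc n := a)) + errw_trans l W X0 h n b * G (h(Suc n := b)))"
proof -
  interpret prob_space M using E unfolding is_errw_def by blast
  have meas: "\<And>k. I k \<in> measurable M (count_space UNIV)" using E unfolding is_errw_def by blast
  define C where "C w = cylinder M I (h(Suc n := w)) (Suc n)" for w
  have C_sets: "C w \<in> sets M" for w unfolding C_def by (rule cylinder_sets[OF meas])
  have "(\<integral>\<omega>. indicator (cylinder M I h n) \<omega> * G (\<lambda>k. I k \<omega>) \<partial>M)
      = (\<integral>\<omega>. G (h(Suc n := a)) * indicator (C a) \<omega> + G (h(Suc n := b)) * indicator (C b) \<omega> \<partial>M)"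
    using errw_cylinder_split_ae[where h=h and n=n, OF E l3 hn G_local] G_meas cylinder_sets[OF meas] C_sets
    unfolding C_def a_def b_def by (intro integral_cong_AE) auto
  also have "\<dots> = G (h(Suc n := a)) * measure M (C a) + G (h(Suc n := b)) * measure M (C b)"
    using C_sets sets.sets_into_space
    by (subst Bochner_Integration.integral_add) (auto simp: Int_absorb2 less_top[symmetric])
  finally show ?thesis
    unfolding C_def errw_cylinder_step[OF E] by (simp add: algebra_simps)
qed

lemma martingale_neighbour_relation:
  assumes l3: "l \<ge> 3" and W_pos: "\<And>k. W k > 0" and E: "is_errw M l W X0 v0 I"
    and mart: "is_martingale M (nat_filtration M I) (\<lambda>n \<omega>. errw_potential l W X0 \<beta> (\<lambda>k. I k \<omega>) n)"
    and hn: "h n < l" and pos: "measure M (cylinder M I h n) > 0"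
  shows "\<beta> (h n) + \<beta> (cpred l (h n)) = 0"
proof -
  define v b where "v = h n" and "b = cpred l v"
  define x where "x j = errw_X l X0 h n j" for j
  define S where "S = W (x v) + W (x b)"
  define d where "d = errw_potential l W X0 \<beta> h n"
  define Y where "Y m \<omega> = errw_potential l W X0 \<beta> (\<lambda>k. I k \<omega>) m" for m \<omega>
  have S_pos: "S > 0" unfolding S_def using W_pos by (simp add: add_pos_pos)
  have Y_meas: "Y (Suc n) \<in> borel_measurable M"
    using mart unfolding is_martingale_def Y_def by (blast intro: borel_measurable_integrable)
  have "(\<integral>\<omega>. indicator (cylinder M I h n) \<omega> * Y (Suc n) \<omega> \<partial>M)
      = measure M (cylinder M I h n) * (W (x v) / S * (d + \<beta> v / W (x v)) + W (x b) / S * (d + \<beta> b / W (x b)))"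
    using errw_cylinder_integral_next[where h=h and n=n and G="\<lambda>p. errw_potential l W X0 \<beta> p (Suc n)",
          OF E l3 hn] Y_meas errw_potential_cong
      errw_trans_at(1,2)[where p=h and n=n and W=W, OF l3 hn] errw_potential_move[where h=h and n=n, OF l3 hn]
    unfolding Y_def b_def v_def S_def x_def d_def by simp
  moreover have "(\<integral>\<omega>. indicator (cylinder M I h n) \<omega> * Y n \<omega> \<partial>M) = measure M (cylinder M I h n) * d"
    unfolding Y_def d_def by (rule cylinder_integral_present) (rule errw_potential_cong)
  moreover have "(\<integral>\<omega>. indicator (cylinder M I h n) \<omega> * Y (Suc n) \<omega> \<partial>M)
      = (\<integral>\<omega>. indicator (cylinder M I h n) \<omega> * Y n \<omega> \<partial>M)"
    using mart cylinder_in_filtration unfolding is_martingale_def Y_def by blast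
  ultimately have "W (x v) / S * (d + \<beta> v / W (x v)) + W (x b) / S * (d + \<beta> b / W (x b)) = d"
    using pos by simp
  moreover have "W (x v) / S * (d + \<beta> v / W (x v)) + W (x b) / S * (d + \<beta> b / W (x b))
      = d + (\<beta> v + \<beta> b) / S"
  proof -
    have "W (x v) / S * (d + \<beta> v / W (x v)) = (d * W (x v) + \<beta> v) / S"
      and "W (x b) / S * (d + \<beta> b / W (x b)) = (d * W (x b) + \<beta> b) / S"
      using W_pos[of "x v"] W_pos[of "x b"] S_pos by (simp_all add: field_simps)
    moreover have "(d * W (x v) + \<beta> v) / S + (d * W (x b) + \<beta> b) / S = d + (\<beta> v + \<beta> b) / S"
      using S_pos unfolding add_divide_distrib[symmetric] by (simp add: S_def field_simps)
    ultimately show ?thesis by (simp only:)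
  qed
  ultimately show ?thesis using S_pos unfolding v_def b_def by simp
qed

text \<open>The walk follows the clockwise path v0, v0 + 1, ... with positive probability up to
  every finite time, since each step has probability W(\<dots>)/S > 0.\<close>
lemma errw_clockwise_cylinder_pos:
  assumes l3: "l \<ge> 3" and W_pos: "\<And>k. W k > 0" and E: "is_errw M l W X0 v0 I" and v0: "v0 < l"
  shows "measure M (cylinder M I (\<lambda>k. (v0 + k) mod l) n) > 0"
proof (induction n)
  case 0
  interpret prob_space M using E unfolding is_errw_def by blast
  have "cylinder M I (\<lambda>k. (v0 + k) mod l) 0 = space M"
    using E v0 unfolding is_errw_def cylinder_def by auto
  then show ?case using prob_space by simp
next
  case (Suc n)
  define h where "h k = (v0 + k) mod l" for k
  have hn: "h n < l" and h_Suc: "h (Suc n) = Suc (h n) mod l"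
    using l3 unfolding h_def by (simp_all add: mod_Suc_eq)
  have "measure M (cylinder M I h (Suc n))
          = measure M (cylinder M I h n) * errw_trans l W X0 h n (Suc (h n) mod l)"
    using errw_cylinder_step[OF E, of h n "h (Suc n)"] unfolding fun_upd_triv by (simp only: h_Suc)
  moreover have "errw_trans l W X0 h n (Suc (h n) mod l) > 0"
    unfolding errw_trans_at(1)[where p=h and n=n, OF l3 hn] using W_pos by (simp add: add_pos_pos)
  ultimately show ?case using Suc.IH unfolding h_def by simp
qed

text \<open>On a cycle of odd length, \<beta>_v + \<beta>_{v-1} = 0 for all v forces \<beta> = 0: the relations
  make \<beta> alternate in sign, which is inconsistent when going once around an odd cycle.\<close>
lemma odd_cycle_alternating_zero:
  fixes \<beta> :: "nat \<Rightarrow> real"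
  assumes "odd l" and rel: "\<And>v. v < l \<Longrightarrow> \<beta> v + \<beta> (cpred l v) = 0"
  shows "\<forall>i<l. \<beta> i = 0"
proof -
  have alt: "\<beta> v = (-1) ^ v * \<beta> 0" if "v < l" for v
    using that
  proof (induction v)
    case (Suc v)
    then show ?case using rel[OF Suc.prems] by (simp add: cpred_def)
  qed simp
  have "\<beta> 0 + \<beta> (l - 1) = 0"
    using rel[of 0] \<open>odd l\<close> by (simp add: cpred_def odd_pos)
  then have "\<beta> 0 = 0"
    using alt[of "l - 1"] \<open>odd l\<close> by (simp add: odd_pos)
  then show ?thesis using alt by simp
qed

text \<open>Main theorem: the clockwise path from v0 reaches every vertex v at time n = v + l - v0
  along a cylinder of positive probability, giving all the relations \<beta>_v + \<beta>_{v-1} = 0.\<close>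
theorem mainTheorem6:
  fixes l :: nat and W :: "nat \<Rightarrow> real" and X0 :: "nat \<Rightarrow> nat" and v0 :: nat
    and M :: "'a measure" and I :: "nat \<Rightarrow> 'a \<Rightarrow> nat" and \<beta> :: "nat \<Rightarrow> real"
  assumes "l \<ge> 3" and "odd l"
    and "\<And>k. W k > 0"
    and "v0 < l"
    and "is_errw M l W X0 v0 I"
    and "is_martingale M (nat_filtration M I)
           (\<lambda>n \<omega>. \<Sum>i<l. \<beta> i * Wstar W (errw_X l X0 (\<lambda>k. I k \<omega>) n i))"
  shows "\<forall>i<l. \<beta> i = 0"
proof (rule odd_cycle_alternating_zero[OF \<open>odd l\<close>])
  fix v assume "v < l"
  define h where "h = (\<lambda>k. (v0 + k) mod l)"
  define n where "n = v + l - v0"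
  have "h n = v" unfolding h_def n_def using \<open>v < l\<close> \<open>v0 < l\<close> by simp
  moreover have "\<beta> (h n) + \<beta> (cpred l (h n)) = 0"
  proof (rule martingale_neighbour_relation[where h=h and n=n, OF assms(1,3,5)])
    show "is_martingale M (nat_filtration M I) (\<lambda>n \<omega>. errw_potential l W X0 \<beta> (\<lambda>k. I k \<omega>) n)"
      using assms(6) unfolding errw_potential_def .
    show "h n < l" using \<open>h n = v\<close> \<open>v < l\<close> by simp
    show "measure M (cylinder M I h n) > 0"
      unfolding h_def by (rule errw_clockwise_cylinder_pos[OF assms(1,3,5,4)])
  qed
  ultimately show "\<beta> v + \<beta> (cpred l v) = 0" by simp
qed

end
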